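(* For every $\beta>0$, the origin is the unique equilibrium of the ODE $\dot x=f(x)$ on $\mathbb R^n\times\mathbb R^n$, $$f(x_1,x_2)=\begin{bmatrix}-Dx_1+\gamma DP\big(M(x_2+Q^* )-M(Q^* )\big)\\ \beta Dx_1-\beta Dx_2\end{bmatrix},$$ and every solution converges to the origin as $t\to\infty$. Equivalently, for the ODE $\dot Q^A=DR+\gamma DPM(Q^B)-DQ^A$, $\dot Q^B=\beta D(Q^A-Q^B)$, every solution satisfies $(Q^A(t),Q^B(t))\to(Q^*,Q^* )$.
   Context: Finite MDP with states $\mathcal S$, actions $\mathcal A$, kernel $P$, expected reward vector $R\in\mathbb R^n$, discount $\gamma\in[0,1)$; $n=|\mathcal S||\mathcal A|$. $D$ is the diagonal matrix of a probability distribution $d$ on $\mathcal S\times\mathcal A$ with $d(s,a)>0$; $P$ is the $n\times|\mathcal S|$ matrix with row $(s,a)$ equal to $P(\cdot\mid s,a)$; $M(Q)(s)=\max_aQ(s,a)$; $Q^*=R+\gamma PM(Q^* )$ is the optimal Q-function. *)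

theory Defs
  imports "HOL-Analysis.Analysis"
begin

definition maxQ :: "real^('s::finite \<times> 'a::finite) \<Rightarrow> 's \<Rightarrow> real" where
  "maxQ Q s = Max (range (\<lambda>a. Q $ (s, a)))"

definition PM :: "('s::finite \<times> 'a::finite \<Rightarrow> 's \<Rightarrow> real) \<Rightarrow> ('s \<Rightarrow> real) \<Rightarrow> real^('s \<times> 'a)" where
  "PM P v = (\<chi> sa. \<Sum>s'\<in>UNIV. P sa s' * v s')"

definition Dmul :: "('i::finite \<Rightarrow> real) \<Rightarrow> real^'i \<Rightarrow> real^'i" where
  "Dmul d x = (\<chi> i. d i * x $ i)"

definition valid_MDP :: "('s::finite \<times> 'a::finite \<Rightarrow> 's \<Rightarrow> real) \<Rightarrow> bool" where
  "valid_MDP P \<longleftrightarrow> (\<forall>sa s'. P sa s' \<ge> 0) \<and> (\<forall>sa. (\<Sum>s'\<in>UNIV. P sa s') = 1)"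

definition valid_dist :: "('i::finite \<Rightarrow> real) \<Rightarrow> bool" where
  "valid_dist d \<longleftrightarrow> (\<forall>i. d i > 0) \<and> (\<Sum>i\<in>UNIV. d i) = 1"

definition errf ::
  "real \<Rightarrow> real \<Rightarrow> ('s::finite \<times> 'a::finite \<Rightarrow> real) \<Rightarrow> ('s \<times> 'a \<Rightarrow> 's \<Rightarrow> real)
   \<Rightarrow> real^('s \<times> 'a) \<Rightarrow> (real^('s \<times> 'a)) \<times> (real^('s \<times> 'a)) \<Rightarrow> (real^('s \<times> 'a)) \<times> (real^('s \<times> 'a))" where
  "errf \<gamma> \<beta> d P Qs x =
     (- Dmul d (fst x) + \<gamma> *\<^sub>R Dmul d (PM P (\<lambda>s. maxQ (snd x + Qs) s - maxQ Qs s)),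
      \<beta> *\<^sub>R Dmul d (fst x) - \<beta> *\<^sub>R Dmul d (snd x))"

definition origf ::
  "real \<Rightarrow> real \<Rightarrow> ('s::finite \<times> 'a::finite \<Rightarrow> real) \<Rightarrow> ('s \<times> 'a \<Rightarrow> 's \<Rightarrow> real)
   \<Rightarrow> real^('s \<times> 'a) \<Rightarrow> (real^('s \<times> 'a)) \<times> (real^('s \<times> 'a)) \<Rightarrow> (real^('s \<times> 'a)) \<times> (real^('s \<times> 'a))" where
  "origf \<gamma> \<beta> d P R q =
     (Dmul d R + \<gamma> *\<^sub>R Dmul d (PM P (maxQ (snd q))) - Dmul d (fst q),
      \<beta> *\<^sub>R Dmul d (fst q - snd q))"

definition is_solution :: "('v::real_normed_vector \<Rightarrow> 'v) \<Rightarrow> (real \<Rightarrow> 'v) \<Rightarrow> bool" where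
  "is_solution F x \<longleftrightarrow> (\<forall>t\<ge>0. (x has_vector_derivative F (x t)) (at t within {0..}))"

end

theory Submission
  imports Defs "HOL-Real_Asymp.Real_Asymp"
begin

text \<open>
  Rescale the second block by \<open>\<rho> = (1 + \<gamma>) / 2\<close>, which lies strictly between \<open>\<gamma>\<close> and \<open>1\<close>.
  In the coordinates \<open>y = (x\<^sub>1, \<rho> x\<^sub>2)\<close> the max-norm is a strict Lyapunov function: at a
  coordinate of maximal modulus \<open>b\<close>, the derivative of \<open>y\<^sub>j\<^sup>2\<close> is at most \<open>-2 \<delta> c b\<^sup>2\<close>. For the
  first block this holds because \<open>M\<close> is 1-Lipschitz in the sup norm and \<open>P\<close> is stochastic, so the
  coupling term has size at most \<open>\<gamma> b / \<rho> < b\<close>; for the second block because \<open>\<rho> x\<^sub>2\<close> relaxes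
  towards \<open>\<rho> x\<^sub>1\<close>, of size at most \<open>\<rho> b < b\<close>. A first-hitting-time argument turns this into
  exponential decay of every coordinate. Equilibria are constant solutions, hence zero, and by
  Bellman's equation the original system is the error system shifted by \<open>(Q\<^sup>*, Q\<^sup>*)\<close>.
\<close>

lemma continuous_on_Max:
  fixes f :: "'i \<Rightarrow> 'a::topological_space \<Rightarrow> 'b::linorder_topology"
  assumes "finite I" "I \<noteq> {}" "\<And>i. i \<in> I \<Longrightarrow> continuous_on S (f i)"
  shows "continuous_on S (\<lambda>t. Max ((\<lambda>i. f i t) ` I))"
  using assms
proof (induction I rule: finite_ne_induct)
  case (insert i I)
  then show ?case
    by (simp add: continuous_on_max)
qed simp

lemma continuous_on_first_root:
  fixes f :: "real \<Rightarrow> real"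
  assumes cont: "continuous_on {0..} f" and neg0: "f 0 < 0" and "0 \<le> t" "0 \<le> f t"
  obtains t0 where "0 < t0" "f t0 = 0" "\<And>s. 0 \<le> s \<Longrightarrow> s < t0 \<Longrightarrow> f s < 0"
proof
  define S where "S = {s \<in> {0..}. 0 \<le> f s}"
  have "closed S"
    unfolding S_def by (rule continuous_on_closed_Collect_le[OF continuous_on_const cont]) simp
  moreover have "bdd_below S" "S \<noteq> {}"
    using assms unfolding S_def by (auto intro: bdd_belowI[where m = 0])
  ultimately have t0S: "Inf S \<in> S"
    by (intro closed_contains_Inf)
  show neg: "f s < 0" if "0 \<le> s" "s < Inf S" for s
    using cInf_lower[OF _ \<open>bdd_below S\<close>, of s] that by (force simp: S_def)
  show "0 < Inf S"
    using t0S neg0 by (force simp: S_def order.order_iff_strict)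
  obtain r where "0 \<le> r" "r \<le> Inf S" "f r = 0"
    using IVT'[of f 0 0 "Inf S"] t0S neg0 cont by (force simp: S_def intro: continuous_on_subset)
  then show "f (Inf S) = 0"
    using neg[of r] by force
qed

lemma exp_decay_of_inward_max_coord:
  fixes y y' :: "real \<Rightarrow> 'j::finite \<Rightarrow> real" and \<kappa> C t :: real
  assumes der: "\<And>t j. 0 \<le> t \<Longrightarrow> ((\<lambda>s. y s j) has_real_derivative y' t j) (at t within {0..})"
    and inward: "\<And>t j. 0 \<le> t \<Longrightarrow> (\<forall>k. \<bar>y t k\<bar> \<le> \<bar>y t j\<bar>) \<Longrightarrow> y t j \<noteq> 0 \<Longrightarrow>
                   y t j * y' t j < - \<kappa> * (y t j)\<^sup>2"
    and init: "\<And>j. \<bar>y 0 j\<bar> < C"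
    and "0 \<le> t"
  shows "\<bar>y t j\<bar> < C * exp (- \<kappa> * t)"
proof (rule ccontr)
  define B where "B t = C * exp (- \<kappa> * t)" for t
  define m where "m t = Max (range (\<lambda>k. \<bar>y t k\<bar>))" for t
  have B_pos: "0 < B t" for t
    using init[of j] by (simp add: B_def)
  have B_deriv: "(B has_real_derivative - \<kappa> * B t) (at t)" for t
    unfolding B_def by (auto intro!: derivative_eq_intros)
  have m_ge: "\<bar>y t k\<bar> \<le> m t" for t k
    unfolding m_def by (rule Max_ge) auto
  have "continuous_on {0..} (\<lambda>s. y s k)" for k
    using DERIV_continuous[OF der] by (auto simp: continuous_on_eq_continuous_within)
  then have "continuous_on {0..} (\<lambda>s. m s - B s)"
    unfolding m_def B_def by (intro continuous_intros continuous_on_Max) auto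
  moreover assume "\<not> \<bar>y t j\<bar> < C * exp (- \<kappa> * t)"
  then have "0 \<le> m t - B t"
    using m_ge[of t j] by (simp add: B_def)
  moreover have "m 0 - B 0 < 0"
    unfolding m_def B_def using init by (simp add: Max_less_iff)
  ultimately obtain t0 where t0: "0 < t0" "m t0 - B t0 = 0"
    and before: "\<And>s. 0 \<le> s \<Longrightarrow> s < t0 \<Longrightarrow> m s - B s < 0"
    using continuous_on_first_root[of "\<lambda>s. m s - B s" t] \<open>0 \<le> t\<close> by blast
  have "m t0 \<in> range (\<lambda>k. \<bar>y t0 k\<bar>)"
    unfolding m_def by (rule Max_in) auto
  then obtain i where i: "\<bar>y t0 i\<bar> = B t0"
    using t0(2) by auto
  define g where "g s = (y s i)\<^sup>2 - (B s)\<^sup>2" for s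
  have "((\<lambda>s. y s i) has_real_derivative y' t0 i) (at t0)"
    using der[of t0 i] at_within_interior[of t0 "{0..}"] t0(1) by simp
  then have g_deriv: "(g has_real_derivative 2 * (y t0 i * y' t0 i + \<kappa> * (B t0)\<^sup>2)) (at t0)"
    unfolding g_def by (auto intro!: derivative_eq_intros B_deriv simp: power2_eq_square algebra_simps)
  have sq: "(y t0 i)\<^sup>2 = (B t0)\<^sup>2"
    using i by (metis power2_abs)
  have "y t0 i * y' t0 i < - \<kappa> * (B t0)\<^sup>2"
    using inward[of t0 i] t0 i m_ge[of t0] B_pos[of t0] sq by force
  then obtain h0 where "0 < h0" and h0: "\<And>h. 0 < h \<Longrightarrow> h < h0 \<Longrightarrow> g t0 < g (t0 - h)"
    using DERIV_neg_dec_left[OF g_deriv] by force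
  have g_neg: "g s < 0" if "0 \<le> s" "s < t0" for s
  proof -
    have "\<bar>y s i\<bar> < B s"
      using before[OF that] m_ge[of s i] by linarith
    then have "\<bar>y s i\<bar>\<^sup>2 < (B s)\<^sup>2"
      by (intro power_strict_mono) auto
    then show ?thesis
      by (simp add: g_def)
  qed
  define h where "h = min h0 t0 / 2"
  have "0 < h" "h < h0" "h \<le> t0"
    using \<open>0 < h0\<close> t0(1) by (auto simp: h_def)
  then have "0 < g (t0 - h)"
    using h0[of h] sq by (simp add: g_def)
  moreover have "g (t0 - h) < 0"
    using g_neg \<open>0 < h\<close> \<open>h \<le> t0\<close> by simp
  ultimately show False
    by simp
qed

lemma maxQ_ge: "Q $ (s, a) \<le> maxQ Q s"
  unfolding maxQ_def by (rule Max_ge) auto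

lemma abs_maxQ_add_diff_le:
  assumes "\<And>j. \<bar>v $ j\<bar> \<le> b"
  shows "\<bar>maxQ (v + Q) s - maxQ Q s\<bar> \<le> b"
proof -
  have "v $ (s, a) + Q $ (s, a) \<le> maxQ Q s + b" for a
    using assms[of "(s, a)"] maxQ_ge[of Q s a] by linarith
  then have "maxQ (v + Q) s \<le> maxQ Q s + b"
    unfolding maxQ_def[of "v + Q"] by (intro Max.boundedI) auto
  moreover have "Q $ (s, a) \<le> maxQ (v + Q) s + b" for a
    using assms[of "(s, a)"] maxQ_ge[of "v + Q" s a] by simp
  then have "maxQ Q s \<le> maxQ (v + Q) s + b"
    unfolding maxQ_def[of Q] by (intro Max.boundedI) auto
  ultimately show ?thesis
    by linarith
qed

lemma abs_PM_le:
  assumes P: "valid_MDP P" and w: "\<And>s. \<bar>w s\<bar> \<le> b"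
  shows "\<bar>PM P w $ i\<bar> \<le> b"
proof -
  have P_nonneg: "0 \<le> P i s" for s
    using P unfolding valid_MDP_def by blast
  have P_sum: "(\<Sum>s\<in>UNIV. P i s) = 1"
    using P unfolding valid_MDP_def by blast
  have "\<bar>PM P w $ i\<bar> \<le> (\<Sum>s\<in>UNIV. \<bar>P i s * w s\<bar>)"
    unfolding PM_def by (simp add: sum_abs)
  also have "\<dots> \<le> (\<Sum>s\<in>UNIV. P i s * b)"
    using w P_nonneg by (intro sum_mono) (simp add: abs_mult mult_left_mono)
  also have "\<dots> = (\<Sum>s\<in>UNIV. P i s) * b"
    by (simp add: sum_distrib_right)
  also have "\<dots> = b"
    using P_sum by simp
  finally show ?thesis .
qed

definition weighted_coord :: "real \<Rightarrow> (real^'i) \<times> (real^'i) \<Rightarrow> 'i \<times> bool \<Rightarrow> real" where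
  "weighted_coord \<rho> z j = (if snd j then fst z $ fst j else \<rho> * snd z $ fst j)"

lemma bounded_linear_weighted_coord: "bounded_linear (\<lambda>z. weighted_coord \<rho> z j)"
proof -
  have "bounded_linear (\<lambda>z :: (real^'i) \<times> (real^'i). fst z $ i)" for i
    by (rule bounded_linear_compose[OF bounded_linear_vec_nth bounded_linear_fst])
  moreover have "bounded_linear (\<lambda>z :: (real^'i) \<times> (real^'i). \<rho> * snd z $ i)" for i
    by (rule bounded_linear_const_mult[OF bounded_linear_compose[OF bounded_linear_vec_nth bounded_linear_snd]])
  ultimately show ?thesis
    unfolding weighted_coord_def by (cases "snd j") simp_all
qed

lemma has_real_derivative_weighted_coord:
  assumes "(x has_vector_derivative v) F"
  shows "((\<lambda>t. weighted_coord \<rho> (x t) j) has_real_derivative weighted_coord \<rho> v j) F"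
  using bounded_linear.has_vector_derivative[OF bounded_linear_weighted_coord assms]
  by (simp add: has_real_derivative_iff_has_vector_derivative)

lemma tendsto_zero_if_weighted_coords:
  assumes "\<rho> \<noteq> 0" and lim: "\<And>j. ((\<lambda>t. weighted_coord \<rho> (x t) j) \<longlongrightarrow> 0) F"
  shows "(x \<longlongrightarrow> 0) F"
proof -
  have "((\<lambda>t. fst (x t)) \<longlongrightarrow> 0) F"
    using lim[of "(_, True)"] by (intro vec_tendstoI) (simp add: weighted_coord_def)
  moreover have "((\<lambda>t. snd (x t)) \<longlongrightarrow> 0) F"
    using tendsto_mult_left[OF lim[of "(_, False)"], of "1 / \<rho>"] \<open>\<rho> \<noteq> 0\<close>
    by (intro vec_tendstoI) (simp add: weighted_coord_def)
  ultimately have "((\<lambda>t. (fst (x t), snd (x t))) \<longlongrightarrow> (0, 0)) F"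
    by (rule tendsto_Pair)
  then show ?thesis
    by (simp add: zero_prod_def)
qed

lemma errf_fst_inward:
  assumes P: "valid_MDP P" and "0 \<le> \<gamma>" "0 < \<rho>" "0 \<le> d i"
    and snd_le: "\<And>k. \<rho> * \<bar>snd z $ k\<bar> \<le> \<bar>fst z $ i\<bar>"
  shows "fst z $ i * fst (errf \<gamma> \<beta> d P Qs z) $ i \<le> - d i * (1 - \<gamma> / \<rho>) * (fst z $ i)\<^sup>2"
proof -
  define b where "b = \<bar>fst z $ i\<bar>"
  define S where "S = PM P (\<lambda>s. maxQ (snd z + Qs) s - maxQ Qs s) $ i"
  have "\<bar>snd z $ k\<bar> \<le> b / \<rho>" for k
    using snd_le[of k] \<open>0 < \<rho>\<close> by (simp add: b_def pos_le_divide_eq mult.commute)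
  then have S_le: "\<bar>S\<bar> \<le> b / \<rho>"
    unfolding S_def by (intro abs_PM_le[OF P] abs_maxQ_add_diff_le)
  have "fst z $ i * S \<le> b * \<bar>S\<bar>"
    using abs_ge_self[of "fst z $ i * S"] by (simp add: b_def abs_mult)
  also have "\<dots> \<le> b * (b / \<rho>)"
    using S_le by (intro mult_left_mono) (simp_all add: b_def)
  also have "\<dots> = (fst z $ i)\<^sup>2 / \<rho>"
    by (simp add: b_def power2_eq_square)
  finally have "\<gamma> * d i * (fst z $ i * S) \<le> \<gamma> * d i * ((fst z $ i)\<^sup>2 / \<rho>)"
    using assms by (intro mult_left_mono) auto
  moreover have "fst z $ i * fst (errf \<gamma> \<beta> d P Qs z) $ i
      = - d i * (fst z $ i)\<^sup>2 + \<gamma> * d i * (fst z $ i * S)"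
    by (simp add: errf_def Dmul_def S_def power2_eq_square algebra_simps)
  moreover have "- d i * (1 - \<gamma> / \<rho>) * (fst z $ i)\<^sup>2
      = - d i * (fst z $ i)\<^sup>2 + \<gamma> * d i * ((fst z $ i)\<^sup>2 / \<rho>)"
    by (simp add: algebra_simps)
  ultimately show ?thesis
    by linarith
qed

lemma errf_snd_inward:
  assumes "0 \<le> \<beta>" "0 \<le> d i" "0 \<le> \<rho>"
    and fst_le: "\<bar>fst z $ i\<bar> \<le> \<rho> * \<bar>snd z $ i\<bar>"
  shows "\<rho> * snd z $ i * (\<rho> * snd (errf \<gamma> \<beta> d P Qs z) $ i) \<le> - \<beta> * d i * (1 - \<rho>) * (\<rho> * snd z $ i)\<^sup>2"
proof -
  define y where "y = \<rho> * snd z $ i"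
  have "y * fst z $ i \<le> \<bar>y\<bar> * \<bar>fst z $ i\<bar>"
    using abs_ge_self[of "y * fst z $ i"] by (simp add: abs_mult)
  also have "\<dots> \<le> \<bar>y\<bar> * \<bar>y\<bar>"
    using fst_le \<open>0 \<le> \<rho>\<close> by (intro mult_left_mono) (simp_all add: y_def abs_mult)
  also have "\<dots> = y\<^sup>2"
    by (simp add: power2_eq_square)
  finally have "\<beta> * d i * (\<rho> * (y * fst z $ i)) \<le> \<beta> * d i * (\<rho> * y\<^sup>2)"
    using assms by (intro mult_left_mono) auto
  moreover have "\<rho> * snd z $ i * (\<rho> * snd (errf \<gamma> \<beta> d P Qs z) $ i)
      = \<beta> * d i * (\<rho> * (y * fst z $ i)) - \<beta> * d i * y\<^sup>2"
    by (simp add: errf_def Dmul_def y_def power2_eq_square algebra_simps)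
  moreover have "- \<beta> * d i * (1 - \<rho>) * y\<^sup>2 = \<beta> * d i * (\<rho> * y\<^sup>2) - \<beta> * d i * y\<^sup>2"
    by (simp add: algebra_simps)
  ultimately show ?thesis
    unfolding y_def by linarith
qed

lemma errf_weighted_inward:
  assumes P: "valid_MDP P"
    and "0 \<le> \<gamma>" "0 < \<rho>" "0 \<le> \<beta>"
    and d_lower: "\<And>i. \<delta> \<le> d i" and "0 \<le> \<delta>"
    and "0 \<le> c" and c_le_fst: "c \<le> 1 - \<gamma> / \<rho>" and c_le_snd: "c \<le> \<beta> * (1 - \<rho>)"
    and max: "\<And>k. \<bar>weighted_coord \<rho> z k\<bar> \<le> \<bar>weighted_coord \<rho> z j\<bar>"
  shows "weighted_coord \<rho> z j * weighted_coord \<rho> (errf \<gamma> \<beta> d P Qs z) j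
    \<le> - \<delta> * c * (weighted_coord \<rho> z j)\<^sup>2"
proof -
  obtain i b where j: "j = (i, b)"
    by (metis prod.exhaust)
  have d_nonneg: "0 \<le> d i"
    using d_lower[of i] \<open>0 \<le> \<delta>\<close> by linarith
  have weaken: "\<delta> * c * y\<^sup>2 \<le> d i * a * y\<^sup>2" if "c \<le> a" for a y :: real
    using that d_lower[of i] d_nonneg \<open>0 \<le> \<delta>\<close> \<open>0 \<le> c\<close>
    by (intro mult_right_mono mult_mono) auto
  have fst_max: "\<bar>fst z $ k\<bar> \<le> \<bar>weighted_coord \<rho> z j\<bar>" for k
    using max[of "(k, True)"] by (simp add: weighted_coord_def)
  have snd_max: "\<rho> * \<bar>snd z $ k\<bar> \<le> \<bar>weighted_coord \<rho> z j\<bar>" for k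
    using max[of "(k, False)"] \<open>0 < \<rho>\<close> by (simp add: weighted_coord_def abs_mult)
  show ?thesis
  proof (cases b)
    case True
    then have "fst z $ i * fst (errf \<gamma> \<beta> d P Qs z) $ i \<le> - d i * (1 - \<gamma> / \<rho>) * (fst z $ i)\<^sup>2"
      using assms d_nonneg snd_max j by (intro errf_fst_inward) (auto simp: weighted_coord_def)
    then show ?thesis
      using weaken[of "1 - \<gamma> / \<rho>" "fst z $ i"] True j c_le_fst by (simp add: weighted_coord_def)
  next
    case False
    then have "\<rho> * snd z $ i * (\<rho> * snd (errf \<gamma> \<beta> d P Qs z) $ i) \<le> - \<beta> * d i * (1 - \<rho>) * (\<rho> * snd z $ i)\<^sup>2"
      using assms d_nonneg fst_max[of i] j by (intro errf_snd_inward) (auto simp: weighted_coord_def abs_mult)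
    then show ?thesis
      using weaken[of "\<beta> * (1 - \<rho>)" "\<rho> * snd z $ i"] False j c_le_snd by (simp add: weighted_coord_def ac_simps)
  qed
qed

lemma errf_solution_tendsto_zero:
  fixes P :: "'s::finite \<times> 'a::finite \<Rightarrow> 's \<Rightarrow> real"
  assumes P: "valid_MDP P" and d: "valid_dist d" and "0 \<le> \<gamma>" "\<gamma> < 1" "0 < \<beta>"
    and sol: "is_solution (errf \<gamma> \<beta> d P Qs) x"
  shows "(x \<longlongrightarrow> 0) at_top"
proof -
  define \<rho> where "\<rho> = (1 + \<gamma>) / 2"
  define \<delta> where "\<delta> = Min (range d)"
  define c where "c = min (1 - \<gamma> / \<rho>) (\<beta> * (1 - \<rho>))"
  define \<kappa> where "\<kappa> = \<delta> * c / 2"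
  define y where "y t = weighted_coord \<rho> (x t)" for t
  define y' where "y' t = weighted_coord \<rho> (errf \<gamma> \<beta> d P Qs (x t))" for t
  have \<rho>: "0 < \<rho>" "\<gamma> < \<rho>" "\<rho> < 1"
    using assms by (auto simp: \<rho>_def)
  have d_pos: "0 < d i" for i
    using d unfolding valid_dist_def by blast
  have "\<delta> \<in> range d"
    unfolding \<delta>_def by (rule Min_in) auto
  then have "0 < \<delta>"
    using d_pos by auto
  have \<delta>_le: "\<delta> \<le> d i" for i
    unfolding \<delta>_def by (rule Min_le) auto
  have "0 < c"
    using \<rho> \<open>0 < \<beta>\<close> by (simp add: c_def field_simps)
  have inward: "y t j * y' t j < - \<kappa> * (y t j)\<^sup>2"
    if "\<forall>k. \<bar>y t k\<bar> \<le> \<bar>y t j\<bar>" "y t j \<noteq> 0" for t j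
  proof -
    have "y t j * y' t j \<le> - \<delta> * c * (y t j)\<^sup>2"
      unfolding y_def y'_def
    proof (rule errf_weighted_inward[OF P])
      show "\<bar>weighted_coord \<rho> (x t) k\<bar> \<le> \<bar>weighted_coord \<rho> (x t) j\<bar>" for k
        using that(1) unfolding y_def by blast
    qed (use assms \<rho> \<delta>_le \<open>0 < \<delta>\<close> \<open>0 < c\<close> in \<open>simp_all add: c_def\<close>)
    moreover have "0 < \<delta> * c * (y t j)\<^sup>2"
      using \<open>0 < \<delta>\<close> \<open>0 < c\<close> that(2) by simp
    ultimately show ?thesis
      by (simp add: \<kappa>_def)
  qed
  have der: "((\<lambda>s. y s j) has_real_derivative y' t j) (at t within {0..})" if "0 \<le> t" for t j
  proof -
    have "(x has_vector_derivative errf \<gamma> \<beta> d P Qs (x t)) (at t within {0..})"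
      using sol that unfolding is_solution_def by blast
    then show ?thesis
      unfolding y_def y'_def by (rule has_real_derivative_weighted_coord)
  qed
  define C where "C = 1 + (\<Sum>j\<in>UNIV. \<bar>y 0 j\<bar>)"
  have init: "\<bar>y 0 j\<bar> < C" for j
    using member_le_sum[of j UNIV "\<lambda>j. \<bar>y 0 j\<bar>"] by (simp add: C_def)
  have bound: "\<bar>y t j\<bar> < C * exp (- \<kappa> * t)" if "0 \<le> t" for t j
    by (rule exp_decay_of_inward_max_coord[where y = y and y' = y']) (use der inward init that in auto)
  have "((\<lambda>t. y t j) \<longlongrightarrow> 0) at_top" for j
  proof (rule Lim_null_comparison)
    show "\<forall>\<^sub>F t in at_top. norm (y t j) \<le> C * exp (- \<kappa> * t)"
      using bound[of _ j] by (intro eventually_at_top_linorderI[of 0]) (simp add: less_imp_le)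
    show "((\<lambda>t. C * exp (- \<kappa> * t)) \<longlongrightarrow> 0) at_top"
      using \<open>0 < \<delta>\<close> \<open>0 < c\<close> unfolding \<kappa>_def by real_asymp
  qed
  then show ?thesis
    using \<rho> by (intro tendsto_zero_if_weighted_coords[of \<rho>]) (auto simp: y_def)
qed

lemma errf_zero: "errf \<gamma> \<beta> d P Qs 0 = 0"
  by (simp add: errf_def Dmul_def PM_def vec_eq_iff zero_prod_def)

lemma origf_eq_errf_shift:
  assumes "Qs = R + \<gamma> *\<^sub>R PM P (maxQ Qs)"
  shows "origf \<gamma> \<beta> d P R q = errf \<gamma> \<beta> d P Qs (q - (Qs, Qs))"
proof -
  have R: "R $ i = Qs $ i - \<gamma> * (\<Sum>s\<in>UNIV. P i s * maxQ Qs s)" for i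
    using arg_cong[OF assms, of "\<lambda>v. v $ i"] by (simp add: PM_def)
  show ?thesis
    by (simp add: origf_def errf_def Dmul_def PM_def vec_eq_iff R sum_subtractf algebra_simps)
qed

lemma is_solution_const: "F z = 0 \<Longrightarrow> is_solution F (\<lambda>t. z)"
  by (simp add: is_solution_def has_vector_derivative_const)

lemma is_solution_shift:
  assumes "is_solution F q" "\<And>z. F z = G (z - a)"
  shows "is_solution G (\<lambda>t. q t - a)"
  unfolding is_solution_def
proof (intro allI impI)
  fix t :: real
  assume "0 \<le> t"
  then have "(q has_vector_derivative F (q t)) (at t within {0..})"
    using assms(1) unfolding is_solution_def by blast
  then have "((\<lambda>t. q t - a) has_vector_derivative F (q t)) (at t within {0..})"
    by (auto intro!: derivative_eq_intros)
  then show "((\<lambda>t. q t - a) has_vector_derivative G (q t - a)) (at t within {0..})"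
    by (simp add: assms(2))
qed

theorem mainTheorem12:
  fixes P :: "'s::finite \<times> 'a::finite \<Rightarrow> 's \<Rightarrow> real"
    and R Qs :: "real^('s \<times> 'a)"
    and d :: "'s \<times> 'a \<Rightarrow> real"
    and \<gamma> \<beta> :: real
  assumes "valid_MDP P"
    and "valid_dist d"
    and "0 \<le> \<gamma>" and "\<gamma> < 1"
    and "Qs = R + \<gamma> *\<^sub>R PM P (maxQ Qs)"
    and "\<beta> > 0"
  shows "{x. errf \<gamma> \<beta> d P Qs x = 0} = {0}
    \<and> (\<forall>x. is_solution (errf \<gamma> \<beta> d P Qs) x \<longrightarrow> (x \<longlongrightarrow> 0) at_top)
    \<and> (\<forall>q. is_solution (origf \<gamma> \<beta> d P R) q \<longrightarrow> (q \<longlongrightarrow> (Qs, Qs)) at_top)"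
proof (intro conjI allI impI)
  note converge = errf_solution_tendsto_zero[OF assms(1-4,6)]
  show "(x \<longlongrightarrow> 0) at_top" if "is_solution (errf \<gamma> \<beta> d P Qs) x" for x
    using converge[OF that] .
  show "{x. errf \<gamma> \<beta> d P Qs x = 0} = {0}"
  proof (intro set_eqI iffI)
    fix z
    assume "z \<in> {x. errf \<gamma> \<beta> d P Qs x = 0}"
    then have "((\<lambda>t::real. z) \<longlongrightarrow> 0) at_top"
      by (intro converge is_solution_const) simp
    then show "z \<in> {0}"
      by (simp add: tendsto_const_iff)
  qed (simp add: errf_zero)
  show "(q \<longlongrightarrow> (Qs, Qs)) at_top" if "is_solution (origf \<gamma> \<beta> d P R) q" for q
  proof -
    have "((\<lambda>t. q t - (Qs, Qs)) \<longlongrightarrow> 0) at_top"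
      using converge is_solution_shift[OF that origf_eq_errf_shift[OF assms(5)]] by blast
    then show ?thesis
      by (simp add: LIM_zero_iff)
  qed
qed

end
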